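(* Let $\vec E$ be as in the context and fix an edge $b\in\Lambda^*$. The map $J_\Lambda\mapsto F_b(J_\Lambda)$ on $\mathbb{R}^{\Lambda^*}\setminus\mathcal C$ is a piecewise affine function with $$\frac{\partial F_b}{\partial J_e}(J_\Lambda)=\begin{cases}2\sigma_e(J_\Lambda)&\text{if } e\in\partial\mathcal D_b(J_\Lambda),\\ 0&\text{otherwise.}\end{cases}$$ Furthermore, this map extends uniquely to a continuous function on $\mathbb{R}^{\Lambda^*}$.
   Context: $\Lambda\subset\mathbb{Z}^d$ is a finite box, $\Lambda^*$ its set of nearest-neighbour edges. For spins $\eta$ and $e=\{x,y\}$, $\eta_e=\eta_x\eta_y$; $\mathcal S_\Lambda\subset\{-1,1\}^{\Lambda^*}$ is the set of edge configurations induced by spin configurations on $\Lambda$. $H_{\Lambda,J}(\eta)=-\sum_{e\in\Lambda^*}J_e\eta_e$ for $J_\Lambda\in\mathbb{R}^{\Lambda^*}$. $\vec E=(E(\eta,\eta'))_{\eta,\eta'\in\mathcal S_\Lambda}$ is a family of reals with $E(\eta,\eta)=0$ and $E(\eta,\eta'')=E(\eta,\eta')+E(\eta',\eta'')$. Critical set $\mathcal C=\bigcup_{\eta\ne\eta'}\{J_\Lambda:\sum_eJ_e(\eta_e-\eta'_e)=E(\eta,\eta')\}$. For $J_\Lambda\notin\mathcal C$, $\eta\prec\eta'$ iff $E(\eta,\eta')+H_{\Lambda,J}(\eta)-H_{\Lambda,J}(\eta')<0$, which is a strict total order on $\mathcal S_\Lambda$; $\sigma(J_\Lambda)$ is the $\prec$-minimal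 element (ground state map), and $\sigma^{\pm,b}(J_\Lambda)$ the $\prec$-minimal element among $\eta$ with $\eta_b=\pm1$. The critical droplet boundary is $\partial\mathcal D_b(J_\Lambda)=\{e\in\Lambda^*:\sigma^{+,b}_e(J_\Lambda)\ne\sigma^{-,b}_e(J_\Lambda)\}$, and the flexibility of $b$ is $$F_b(J_\Lambda)=\Big|-\sum_{e\in\Lambda^*}J_e\big(\sigma^{+,b}_e(J_\Lambda)-\sigma^{-,b}_e(J_\Lambda)\big)+E\big(\sigma^{+,b}(J_\Lambda),\sigma^{-,b}(J_\Lambda)\big)\Big|.$$ *)

theory Defs
  imports "HOL-Analysis.Analysis"
begin

text \<open>Sites are points of Z^d, represented as int^'d (d = CARD('d) \<ge> 1). Edge configurations and couplings are
  real-valued functions on edges (set to 0 outside the edge set of the box).\<close>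

type_synonym 'd site = "int ^ 'd"
type_synonym 'd edge = "'d site set"
type_synonym 'd econf = "'d edge \<Rightarrow> real"

definition zbox :: "'d::finite site \<Rightarrow> 'd site \<Rightarrow> 'd site set" where
  "zbox lo hi = {x. \<forall>i. lo $ i \<le> x $ i \<and> x $ i \<le> hi $ i}"

definition nn_edges :: "'d::finite site set \<Rightarrow> 'd edge set" where
  "nn_edges L = {{x, y} | x y. x \<in> L \<and> y \<in> L \<and> (\<Sum>i\<in>UNIV. \<bar>x $ i - y $ i\<bar>) = 1}"

definition edge_configs :: "'d::finite site set \<Rightarrow> 'd econf set" where
  "edge_configs L = {(\<lambda>e. if e \<in> nn_edges L then (\<Prod>x\<in>e. s x) else 0) | s.
                       \<forall>x\<in>L. s x \<in> {-1, 1::real}}"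

definition consistent_E :: "'d::finite site set \<Rightarrow> ('d econf \<Rightarrow> 'd econf \<Rightarrow> real) \<Rightarrow> bool" where
  "consistent_E L E \<longleftrightarrow>
     (\<forall>\<eta>\<in>edge_configs L. E \<eta> \<eta> = 0) \<and>
     (\<forall>\<eta>\<in>edge_configs L. \<forall>\<eta>'\<in>edge_configs L. \<forall>\<eta>''\<in>edge_configs L.
        E \<eta> \<eta>'' = E \<eta> \<eta>' + E \<eta>' \<eta>'')"

definition hamiltonian :: "'d::finite site set \<Rightarrow> 'd econf \<Rightarrow> 'd econf \<Rightarrow> real" where
  "hamiltonian L J \<eta> = - (\<Sum>e\<in>nn_edges L. J e * \<eta> e)"

text \<open>The space R^{Lambda*}: couplings vanishing outside the edge set.\<close>
definition coupling_space :: "'d::finite site set \<Rightarrow> 'd econf set" where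
  "coupling_space L = {J. \<forall>e. e \<notin> nn_edges L \<longrightarrow> J e = 0}"

definition critical_set :: "'d::finite site set \<Rightarrow> ('d econf \<Rightarrow> 'd econf \<Rightarrow> real) \<Rightarrow> 'd econf set" where
  "critical_set L E = {J. \<exists>\<eta>\<in>edge_configs L. \<exists>\<eta>'\<in>edge_configs L. \<eta> \<noteq> \<eta>' \<and>
      (\<Sum>e\<in>nn_edges L. J e * (\<eta> e - \<eta>' e)) = E \<eta> \<eta>'}"

definition prec :: "'d::finite site set \<Rightarrow> ('d econf \<Rightarrow> 'd econf \<Rightarrow> real) \<Rightarrow> 'd econf
                      \<Rightarrow> 'd econf \<Rightarrow> 'd econf \<Rightarrow> bool" where
  "prec L E J \<eta> \<eta>' \<longleftrightarrow> E \<eta> \<eta>' + hamiltonian L J \<eta> - hamiltonian L J \<eta>' < 0"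

text \<open>The prec-minimal element of edge_configs L among those satisfying P
  (meaningful for J outside the critical set, where prec is a strict total order).\<close>
definition restr_min :: "'d::finite site set \<Rightarrow> ('d econf \<Rightarrow> 'd econf \<Rightarrow> real) \<Rightarrow> 'd econf
                          \<Rightarrow> ('d econf \<Rightarrow> bool) \<Rightarrow> 'd econf" where
  "restr_min L E J P = (THE \<eta>. \<eta> \<in> edge_configs L \<and> P \<eta> \<and>
      (\<forall>\<eta>'\<in>edge_configs L. P \<eta>' \<and> \<eta>' \<noteq> \<eta> \<longrightarrow> prec L E J \<eta> \<eta>'))"

definition ground_state :: "'d::finite site set \<Rightarrow> ('d econf \<Rightarrow> 'd econf \<Rightarrow> real) \<Rightarrow> 'd econf \<Rightarrow> 'd econf" where
  "ground_state L E J = restr_min L E J (\<lambda>_. True)"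

definition ground_state_b :: "'d::finite site set \<Rightarrow> ('d econf \<Rightarrow> 'd econf \<Rightarrow> real) \<Rightarrow> 'd edge
                               \<Rightarrow> real \<Rightarrow> 'd econf \<Rightarrow> 'd econf" where
  "ground_state_b L E b s J = restr_min L E J (\<lambda>\<eta>. \<eta> b = s)"

definition droplet_boundary :: "'d::finite site set \<Rightarrow> ('d econf \<Rightarrow> 'd econf \<Rightarrow> real) \<Rightarrow> 'd edge
                                 \<Rightarrow> 'd econf \<Rightarrow> 'd edge set" where
  "droplet_boundary L E b J = {e \<in> nn_edges L.
      ground_state_b L E b 1 J e \<noteq> ground_state_b L E b (-1) J e}"

definition flexibility :: "'d::finite site set \<Rightarrow> ('d econf \<Rightarrow> 'd econf \<Rightarrow> real) \<Rightarrow> 'd edge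
                            \<Rightarrow> 'd econf \<Rightarrow> real" where
  "flexibility L E b J = \<bar>- (\<Sum>e\<in>nn_edges L. J e * (ground_state_b L E b 1 J e - ground_state_b L E b (-1) J e))
                          + E (ground_state_b L E b 1 J) (ground_state_b L E b (-1) J)\<bar>"

definition piecewise_affine_on :: "'d::finite site set \<Rightarrow> 'd econf set \<Rightarrow> ('d econf \<Rightarrow> real) \<Rightarrow> bool" where
  "piecewise_affine_on L U f \<longleftrightarrow>
     (\<exists>A :: ('d econf \<times> real) set. finite A \<and>
        (\<forall>J\<in>U. \<exists>\<epsilon>>0. \<exists>(g, c)\<in>A. \<forall>J'\<in>U. (\<forall>e\<in>nn_edges L. \<bar>J' e - J e\<bar> < \<epsilon>) \<longrightarrow>
            f J' = c + (\<Sum>e\<in>nn_edges L. g e * J' e)))"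

end

theory Submission
  imports Defs
begin

(* Fix any reference configuration \<eta>\<^sub>0. The cocycle identity gives
  E(\<eta>, \<eta>') = E(\<eta>\<^sub>0, \<eta>') - E(\<eta>\<^sub>0, \<eta>), so \<eta> \<prec> \<eta>' just compares the values of the affine
  functions K\<^sub>J(\<eta>) = H\<^sub>J(\<eta>) - E(\<eta>\<^sub>0, \<eta>) of J, and J lies off the critical set exactly when these
  finitely many values are pairwise distinct. Their order is then constant near J, hence so are
  the restricted minimisers \<sigma>\<^sup>+ and \<sigma>\<^sup>-, and F\<^sub>b = |K\<^sub>J(\<sigma>\<^sup>+) - K\<^sub>J(\<sigma>\<^sup>-)| coincides near J with
  one of finitely many affine functions, whose partial derivatives can be read off.
  Globally F\<^sub>b = |min {K\<^sub>J(\<eta>) | \<eta>\<^sub>b = 1} - min {K\<^sub>J(\<eta>) | \<eta>\<^sub>b = -1}|, which is continuous in J;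
  since the critical set is a finite union of hyperplanes, its complement is dense and the
  continuous extension is unique. *)

lemma finite_zbox: "finite (zbox lo hi)"
proof -
  have "zbox lo hi \<subseteq> (\<lambda>f. \<chi> i. f i) ` PiE UNIV (\<lambda>i. {lo $ i..hi $ i})"
  proof
    fix x assume "x \<in> zbox lo hi"
    then have "(\<lambda>i. x $ i) \<in> PiE UNIV (\<lambda>i. {lo $ i..hi $ i})" by (auto simp: zbox_def)
    then show "x \<in> (\<lambda>f. \<chi> i. f i) ` PiE UNIV (\<lambda>i. {lo $ i..hi $ i})"
      by (rule rev_image_eqI) simp
  qed
  moreover have "finite (PiE (UNIV :: 'a set) (\<lambda>i. {lo $ i..hi $ i}))"
    by (rule finite_PiE) auto
  ultimately show ?thesis by (meson finite_imageI finite_subset)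
qed

lemma finite_nn_edges: "finite L \<Longrightarrow> finite (nn_edges L)"
  by (rule finite_subset[of _ "Pow L"]) (auto simp: nn_edges_def)

lemma nn_edgesE:
  assumes "e \<in> nn_edges L"
  obtains x y where "e = {x, y}" "x \<noteq> y" "x \<in> L" "y \<in> L"
  using assms by (fastforce simp: nn_edges_def)

lemma edge_config_values:
  assumes "\<eta> \<in> edge_configs L"
  shows edge_config_on_edge: "e \<in> nn_edges L \<Longrightarrow> \<eta> e = 1 \<or> \<eta> e = -1"
    and edge_config_off_edge: "e \<notin> nn_edges L \<Longrightarrow> \<eta> e = 0"
proof -
  obtain s where \<eta>: "\<eta> = (\<lambda>e. if e \<in> nn_edges L then \<Prod>x\<in>e. s x else 0)"
    and s: "\<forall>x\<in>L. s x \<in> {-1, 1::real}"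
    using assms by (auto simp: edge_configs_def)
  show "e \<notin> nn_edges L \<Longrightarrow> \<eta> e = 0" using \<eta> by simp
  assume "e \<in> nn_edges L"
  then obtain x y where "e = {x, y}" "x \<noteq> y" "x \<in> L" "y \<in> L" by (rule nn_edgesE)
  moreover have "s x \<in> {-1, 1}" "s y \<in> {-1, 1}" using s \<open>x \<in> L\<close> \<open>y \<in> L\<close> by auto
  ultimately show "\<eta> e = 1 \<or> \<eta> e = -1" using \<open>e \<in> nn_edges L\<close> by (auto simp: \<eta>)
qed

lemma finite_edge_configs:
  assumes "finite L"
  shows "finite (edge_configs L)"
proof -
  let ?N = "nn_edges L"
  have "edge_configs L \<subseteq> (\<lambda>f e. if e \<in> ?N then f e else 0) ` PiE ?N (\<lambda>_. {-1, 1::real})"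
  proof
    fix \<eta> assume \<eta>: "\<eta> \<in> edge_configs L"
    have "restrict \<eta> ?N \<in> PiE ?N (\<lambda>_. {-1, 1})" using edge_config_on_edge[OF \<eta>] by auto
    moreover have "\<eta> = (\<lambda>e. if e \<in> ?N then restrict \<eta> ?N e else 0)"
      using edge_config_off_edge[OF \<eta>] by (auto simp: fun_eq_iff)
    ultimately show "\<eta> \<in> (\<lambda>f e. if e \<in> ?N then f e else 0) ` PiE ?N (\<lambda>_. {-1, 1})"
      by blast
  qed
  moreover have "finite (PiE ?N (\<lambda>_. {-1, 1::real}))"
    using finite_nn_edges[OF assms] by (intro finite_PiE) auto
  ultimately show ?thesis by (meson finite_imageI finite_subset)
qed

lemma edge_config_with_value:
  assumes "b \<in> nn_edges L" "s \<in> {1, -1::real}"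
  shows "\<exists>\<eta>\<in>edge_configs L. \<eta> b = s"
proof -
  obtain x y where xy: "b = {x, y}" "x \<noteq> y" "x \<in> L" "y \<in> L"
    using assms(1) by (rule nn_edgesE)
  define spin where "spin = (\<lambda>z. if z = x then s else 1)"
  define \<eta> where "\<eta> = (\<lambda>e. if e \<in> nn_edges L then \<Prod>z\<in>e. spin z else 0)"
  have "\<eta> \<in> edge_configs L"
    unfolding edge_configs_def \<eta>_def using assms(2)
    by (auto simp: spin_def intro!: exI[of _ spin] split: if_splits)
  moreover have "\<eta> b = s" using assms xy by (simp add: \<eta>_def spin_def)
  ultimately show ?thesis by blast
qed

lemma finite_pos_lower_bound:
  assumes "finite S" "\<And>x. x \<in> S \<Longrightarrow> (0::real) < f x"
  obtains \<delta> where "\<delta> > 0" "\<And>x. x \<in> S \<Longrightarrow> \<delta> \<le> f x"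
proof
  show "Min (insert 1 (f ` S)) > 0" using assms by (subst Min_gr_iff) auto
  show "Min (insert 1 (f ` S)) \<le> f x" if "x \<in> S" for x using assms that by auto
qed

lemma continuous_on_Min_image:
  fixes f :: "'a::topological_space \<Rightarrow> 'b \<Rightarrow> 'c::linorder_topology"
  assumes "finite S" "S \<noteq> {}" "\<And>x. x \<in> S \<Longrightarrow> continuous_on U (\<lambda>z. f z x)"
  shows "continuous_on U (\<lambda>z. Min (f z ` S))"
  using assms
proof (induction S rule: finite_ne_induct)
  case (singleton x)
  then show ?case by simp
next
  case (insert x F)
  then have "(\<lambda>z. Min (f z ` insert x F)) = (\<lambda>z. min (f z x) (Min (f z ` F)))"
    by (auto simp: fun_eq_iff)
  with insert show ?case by (auto intro!: continuous_on_min)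
qed

lemma continuous_on_eq_on_dense:
  fixes f g :: "'a::topological_space \<Rightarrow> 'b::real_normed_vector"
  assumes "continuous_on T f" "continuous_on T g" "\<And>x. x \<in> S \<Longrightarrow> f x = g x"
    and "S \<subseteq> T" "T \<subseteq> closure S" "x \<in> T"
  shows "f x = g x"
proof -
  have "continuous_on T (\<lambda>x. f x - g x)" using assms(1,2) by (intro continuous_intros)
  then have "closedin (top_of_set T) {x \<in> T. f x - g x = 0}"
    by (rule continuous_closedin_preimage_constant)
  then obtain Z where "closed Z" and Z: "{x \<in> T. f x - g x = 0} = T \<inter> Z"
    by (auto simp: closedin_closed)
  with assms(3,4) have "closure S \<subseteq> Z" by (intro closure_minimal) auto
  with assms(5,6) Z show ?thesis by auto
qed

lemma continuous_on_shift_coordinate: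
  "continuous_on UNIV (\<lambda>t::real. (J::'a \<Rightarrow> real)(e0 := J e0 + t))"
proof (intro continuous_on_coordinatewise_then_product)
  show "continuous_on UNIV (\<lambda>t. (J(e0 := J e0 + t)) i)" for i
    by (cases "i = e0") (auto intro!: continuous_intros)
qed

lemma perturb_off_hyperplane:
  fixes J d :: "'a \<Rightarrow> real"
  assumes "finite N" "e0 \<in> N" "d e0 \<noteq> 0" "open U" "J \<in> U"
  obtains t where "J(e0 := J e0 + t) \<in> U" "(\<Sum>e\<in>N. (J(e0 := J e0 + t)) e * d e) \<noteq> c"
proof -
  let ?p = "\<lambda>t. J(e0 := J e0 + t)"
  have "open (?p -` U)" using assms(4) continuous_on_shift_coordinate by (rule open_vimage)
  moreover have "0 \<in> ?p -` U" using assms(5) by simp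
  ultimately obtain r where "r > 0" "ball 0 r \<subseteq> ?p -` U"
    by (meson open_contains_ball)
  then have in_U: "?p (r / 2) \<in> U" "?p 0 \<in> U" using assms(5) by (auto simp: subset_iff)
  have sum: "(\<Sum>e\<in>N. ?p t e * d e) = (\<Sum>e\<in>N. J e * d e) + t * d e0" for t
    using assms(1,2) by (simp add: sum.remove algebra_simps)
  have "(\<Sum>e\<in>N. ?p 0 e * d e) \<noteq> c \<or> (\<Sum>e\<in>N. ?p (r / 2) e * d e) \<noteq> c"
    unfolding sum using \<open>r > 0\<close> assms(3) by auto
  with in_U that show ?thesis by blast
qed

lemma avoid_hyperplanes:
  fixes P :: "(('a \<Rightarrow> real) \<times> real) set"
  assumes "finite N" "finite P" "\<forall>(d, c)\<in>P. \<exists>e\<in>N. d e \<noteq> 0"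
    and "open U" "J \<in> U" "\<forall>e. e \<notin> N \<longrightarrow> J e = 0"
  shows "\<exists>J'\<in>U. (\<forall>e. e \<notin> N \<longrightarrow> J' e = 0) \<and> (\<forall>(d, c)\<in>P. (\<Sum>e\<in>N. J' e * d e) \<noteq> c)"
  using assms(2-)
proof (induction P arbitrary: U J rule: finite_induct)
  case empty
  then show ?case by blast
next
  case (insert h P)
  obtain d c where h: "h = (d, c)" by fastforce
  obtain e0 where e0: "e0 \<in> N" "d e0 \<noteq> 0" using insert.prems(1) h by auto
  obtain t where t: "J(e0 := J e0 + t) \<in> U" "(\<Sum>e\<in>N. (J(e0 := J e0 + t)) e * d e) \<noteq> c"
    using assms(1) e0 insert.prems(2,3) by (rule perturb_off_hyperplane)
  let ?V = "U \<inter> (\<lambda>J. \<Sum>e\<in>N. J e * d e) -` (- {c})"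
  have "continuous_on UNIV (\<lambda>J. \<Sum>e\<in>N. J e * d e)"
    by (intro continuous_intros continuous_on_product_coordinates)
  then have "open ?V" using insert.prems(2) by (intro open_Int open_vimage) auto
  moreover have "J(e0 := J e0 + t) \<in> ?V" using t by simp
  moreover have "\<forall>e. e \<notin> N \<longrightarrow> (J(e0 := J e0 + t)) e = 0" using insert.prems(4) e0 by auto
  ultimately obtain J' where "J' \<in> ?V" "\<forall>e. e \<notin> N \<longrightarrow> J' e = 0"
    "\<forall>(d, c)\<in>P. (\<Sum>e\<in>N. J' e * d e) \<noteq> c"
    using insert.IH insert.prems(1) by blast
  with h show ?case by auto
qed

locale flexibility_setting =
  fixes L :: "'d::finite site set" and E :: "'d econf \<Rightarrow> 'd econf \<Rightarrow> real" and b :: "'d edge"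
  assumes finite_sites: "finite L" and consistent: "consistent_E L E" and b_edge: "b \<in> nn_edges L"
begin

abbreviation "configs \<equiv> edge_configs L"
abbreviation "edges \<equiv> nn_edges L"
abbreviation "plus_state J \<equiv> ground_state_b L E b 1 J"
abbreviation "minus_state J \<equiv> ground_state_b L E b (-1) J"

definition ref_config :: "'d econf" where
  "ref_config = (SOME \<eta>. \<eta> \<in> configs)"

definition energy :: "'d econf \<Rightarrow> 'd econf \<Rightarrow> real" where
  "energy J \<eta> = hamiltonian L J \<eta> - E ref_config \<eta>"

definition noncritical :: "'d econf \<Rightarrow> bool" where
  "noncritical J \<longleftrightarrow> inj_on (energy J) configs"

lemma finite_configs: "finite configs"
  using finite_sites by (rule finite_edge_configs)

lemma finite_edges: "finite edges"
  using finite_sites by (rule finite_nn_edges)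

lemma ref_config_mem: "ref_config \<in> configs"
proof -
  obtain \<eta> where "\<eta> \<in> configs" using edge_config_with_value[OF b_edge, of 1] by auto
  then show ?thesis unfolding ref_config_def by (metis someI)
qed

lemma E_eq_diff:
  "\<eta> \<in> configs \<Longrightarrow> \<eta>' \<in> configs \<Longrightarrow> E \<eta> \<eta>' = E ref_config \<eta>' - E ref_config \<eta>"
proof -
  assume "\<eta> \<in> configs" "\<eta>' \<in> configs"
  with consistent ref_config_mem have "E ref_config \<eta>' = E ref_config \<eta> + E \<eta> \<eta>'"
    unfolding consistent_E_def by blast
  then show ?thesis by simp
qed

lemma prec_iff_energy_less:
  "\<eta> \<in> configs \<Longrightarrow> \<eta>' \<in> configs \<Longrightarrow> prec L E J \<eta> \<eta>' \<longleftrightarrow> energy J \<eta> < energy J \<eta>'"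
  by (auto simp: prec_def energy_def E_eq_diff)

lemma energy_eq: "energy J \<eta> = - (\<Sum>e\<in>edges. J e * \<eta> e) - E ref_config \<eta>"
  by (simp add: energy_def hamiltonian_def)

lemma critical_set_iff: "J \<in> critical_set L E \<longleftrightarrow> \<not> noncritical J"
proof -
  have "(\<Sum>e\<in>edges. J e * (\<eta> e - \<eta>' e)) = E \<eta> \<eta>' \<longleftrightarrow> energy J \<eta> = energy J \<eta>'"
    if "\<eta> \<in> configs" "\<eta>' \<in> configs" for \<eta> \<eta>'
    using that by (auto simp: energy_eq E_eq_diff right_diff_distrib sum_subtractf)
  then show ?thesis unfolding critical_set_def noncritical_def inj_on_def by blast
qed

lemma restr_min_eqI:
  assumes "r \<in> configs" "P r" "\<forall>\<eta>\<in>configs. P \<eta> \<and> \<eta> \<noteq> r \<longrightarrow> energy J r < energy J \<eta>"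
  shows "restr_min L E J P = r"
  unfolding restr_min_def
proof (rule the_equality)
  show "r \<in> configs \<and> P r \<and> (\<forall>\<eta>'\<in>configs. P \<eta>' \<and> \<eta>' \<noteq> r \<longrightarrow> prec L E J r \<eta>')"
    using assms by (simp add: prec_iff_energy_less)
next
  fix x assume x: "x \<in> configs \<and> P x \<and> (\<forall>\<eta>'\<in>configs. P \<eta>' \<and> \<eta>' \<noteq> x \<longrightarrow> prec L E J x \<eta>')"
  show "x = r"
  proof (rule ccontr)
    assume "x \<noteq> r"
    with x assms have "energy J x < energy J r" "energy J r < energy J x"
      by (auto simp: prec_iff_energy_less)
    then show False by simp
  qed
qed

lemma restr_min_minimal:
  assumes "noncritical J" "\<exists>\<eta>\<in>configs. P \<eta>"
  shows "restr_min L E J P \<in> configs \<and> P (restr_min L E J P) \<and>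
    (\<forall>\<eta>\<in>configs. P \<eta> \<and> \<eta> \<noteq> restr_min L E J P \<longrightarrow> energy J (restr_min L E J P) < energy J \<eta>)"
proof -
  let ?S = "{\<eta>\<in>configs. P \<eta>}"
  have "finite ?S" "?S \<noteq> {}" using finite_configs assms(2) by auto
  then have "Min (energy J ` ?S) \<in> energy J ` ?S" by (intro Min_in) auto
  then obtain r where r: "r \<in> configs" "P r" and r_min: "energy J r = Min (energy J ` ?S)"
    by (metis (no_types, lifting) imageE mem_Collect_eq)
  have less: "\<forall>\<eta>\<in>configs. P \<eta> \<and> \<eta> \<noteq> r \<longrightarrow> energy J r < energy J \<eta>"
  proof (intro ballI impI)
    fix \<eta> assume "\<eta> \<in> configs" "P \<eta> \<and> \<eta> \<noteq> r"
    then have "Min (energy J ` ?S) \<le> energy J \<eta>" using \<open>finite ?S\<close> by (intro Min_le) auto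
    moreover have "energy J r \<noteq> energy J \<eta>"
      using assms(1) r \<open>\<eta> \<in> configs\<close> \<open>P \<eta> \<and> \<eta> \<noteq> r\<close> unfolding noncritical_def inj_on_def by blast
    ultimately show "energy J r < energy J \<eta>" using r_min by simp
  qed
  then have "restr_min L E J P = r" using r by (intro restr_min_eqI)
  with r less show ?thesis by simp
qed

lemma Min_energy_restr_min:
  assumes "noncritical J" "\<exists>\<eta>\<in>configs. P \<eta>"
  shows "Min (energy J ` {\<eta>\<in>configs. P \<eta>}) = energy J (restr_min L E J P)"
proof (rule Min_eqI)
  note min = restr_min_minimal[OF assms]
  show "finite (energy J ` {\<eta>\<in>configs. P \<eta>})" using finite_configs by simp
  show "energy J (restr_min L E J P) \<in> energy J ` {\<eta>\<in>configs. P \<eta>}" using min by blast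
  fix y assume "y \<in> energy J ` {\<eta>\<in>configs. P \<eta>}"
  then obtain \<eta> where "\<eta> \<in> configs" "P \<eta>" "y = energy J \<eta>" by blast
  with min show "energy J (restr_min L E J P) \<le> y"
    by (cases "\<eta> = restr_min L E J P") (simp_all add: less_imp_le)
qed

lemma ground_state_b_minimal:
  assumes "noncritical J" "s \<in> {1, -1}"
  shows "ground_state_b L E b s J \<in> configs \<and> ground_state_b L E b s J b = s \<and>
    (\<forall>\<eta>\<in>configs. \<eta> b = s \<and> \<eta> \<noteq> ground_state_b L E b s J
       \<longrightarrow> energy J (ground_state_b L E b s J) < energy J \<eta>)"
  unfolding ground_state_b_def
  using edge_config_with_value[OF b_edge assms(2)] by (rule restr_min_minimal[OF assms(1)])

lemma plus_state_ne_minus_state: "noncritical J \<Longrightarrow> plus_state J \<noteq> minus_state J"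
  using ground_state_b_minimal[of J 1] ground_state_b_minimal[of J "-1"] by fastforce

lemma energy_plus_ne_minus:
  assumes "noncritical J"
  shows "energy J (plus_state J) \<noteq> energy J (minus_state J)"
  using assms plus_state_ne_minus_state[OF assms]
    ground_state_b_minimal[OF assms, of 1] ground_state_b_minimal[OF assms, of "-1"]
  unfolding noncritical_def inj_on_def by auto

lemma flexibility_eq:
  assumes "noncritical J"
  shows "flexibility L E b J = \<bar>energy J (plus_state J) - energy J (minus_state J)\<bar>"
  using ground_state_b_minimal[OF assms, of 1] ground_state_b_minimal[OF assms, of "-1"]
  by (simp add: flexibility_def energy_eq E_eq_diff right_diff_distrib sum_subtractf)

lemma energy_perturbation_bound:
  assumes "\<forall>e\<in>edges. \<bar>J' e - J e\<bar> \<le> \<epsilon>" "\<eta> \<in> configs"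
  shows "\<bar>energy J' \<eta> - energy J \<eta>\<bar> \<le> real (card edges) * \<epsilon>"
proof -
  have "\<bar>energy J' \<eta> - energy J \<eta>\<bar> = \<bar>\<Sum>e\<in>edges. (J' e - J e) * \<eta> e\<bar>"
    by (simp add: energy_eq left_diff_distrib sum_subtractf)
  also have "\<dots> \<le> (\<Sum>e\<in>edges. \<bar>J' e - J e\<bar> * \<bar>\<eta> e\<bar>)"
    using sum_abs[of "\<lambda>e. (J' e - J e) * \<eta> e" edges] by (simp add: abs_mult)
  also have "\<dots> \<le> (\<Sum>e\<in>edges. \<epsilon>)"
  proof (rule sum_mono)
    fix e assume "e \<in> edges"
    then have "\<eta> e = 1 \<or> \<eta> e = -1" by (rule edge_config_on_edge[OF assms(2)])
    then have "\<bar>\<eta> e\<bar> = 1" by auto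
    with assms(1) \<open>e \<in> edges\<close> show "\<bar>J' e - J e\<bar> * \<bar>\<eta> e\<bar> \<le> \<epsilon>" by simp
  qed
  finally show ?thesis by simp
qed

lemma energy_order_stable:
  assumes "noncritical J"
  obtains \<epsilon> where "\<epsilon> > 0"
    "\<And>J' \<eta> \<eta>'. \<forall>e\<in>edges. \<bar>J' e - J e\<bar> < \<epsilon> \<Longrightarrow> \<eta> \<in> configs \<Longrightarrow> \<eta>' \<in> configs \<Longrightarrow>
       energy J \<eta> < energy J \<eta>' \<Longrightarrow> energy J' \<eta> < energy J' \<eta>'"
proof -
  let ?D = "{(\<eta>, \<eta>'). \<eta> \<in> configs \<and> \<eta>' \<in> configs \<and> \<eta> \<noteq> \<eta>'}"
  let ?gap = "\<lambda>(\<eta>, \<eta>'). \<bar>energy J \<eta> - energy J \<eta>'\<bar>"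
  have "finite ?D" by (rule finite_subset[of _ "configs \<times> configs"]) (auto simp: finite_configs)
  moreover have "0 < ?gap x" if "x \<in> ?D" for x
    using assms that by (auto simp: noncritical_def inj_on_def)
  ultimately obtain \<delta> where "\<delta> > 0" and gap: "\<And>x. x \<in> ?D \<Longrightarrow> \<delta> \<le> ?gap x"
    using finite_pos_lower_bound[of ?D ?gap] by blast
  define \<epsilon> where "\<epsilon> = \<delta> / (2 * (real (card edges) + 1))"
  have "\<epsilon> > 0" using \<open>\<delta> > 0\<close> by (simp add: \<epsilon>_def)
  have small: "real (card edges) * \<epsilon> < \<delta> / 2" using \<open>\<delta> > 0\<close> by (simp add: \<epsilon>_def field_simps)
  show ?thesis
  proof (rule that[OF \<open>\<epsilon> > 0\<close>])
    fix J' \<eta> \<eta>' assume near: "\<forall>e\<in>edges. \<bar>J' e - J e\<bar> < \<epsilon>" and \<eta>: "\<eta> \<in> configs" "\<eta>' \<in> configs"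
      and less: "energy J \<eta> < energy J \<eta>'"
    have "\<delta> \<le> \<bar>energy J \<eta> - energy J \<eta>'\<bar>" using gap[of "(\<eta>, \<eta>')"] \<eta> less by auto
    moreover have "\<forall>e\<in>edges. \<bar>J' e - J e\<bar> \<le> \<epsilon>" using near by (simp add: order_less_imp_le)
    then have "\<bar>energy J' \<eta> - energy J \<eta>\<bar> \<le> real (card edges) * \<epsilon>"
      "\<bar>energy J' \<eta>' - energy J \<eta>'\<bar> \<le> real (card edges) * \<epsilon>"
      using energy_perturbation_bound \<eta> by auto
    ultimately show "energy J' \<eta> < energy J' \<eta>'" using less small by linarith
  qed
qed

lemma flexibility_local_branch:
  assumes "noncritical J"
  obtains \<epsilon> where "\<epsilon> > 0" "\<And>J'. \<forall>e\<in>edges. \<bar>J' e - J e\<bar> < \<epsilon> \<Longrightarrow>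
      flexibility L E b J' = sgn (energy J (plus_state J) - energy J (minus_state J)) *
        (energy J' (plus_state J) - energy J' (minus_state J))"
proof -
  obtain \<epsilon> where "\<epsilon> > 0" and stable: "\<And>J' \<eta> \<eta>'. \<forall>e\<in>edges. \<bar>J' e - J e\<bar> < \<epsilon> \<Longrightarrow>
      \<eta> \<in> configs \<Longrightarrow> \<eta>' \<in> configs \<Longrightarrow> energy J \<eta> < energy J \<eta>' \<Longrightarrow> energy J' \<eta> < energy J' \<eta>'"
    using energy_order_stable[OF assms] by blast
  let ?p = "plus_state J" and ?m = "minus_state J"
  show ?thesis
  proof (rule that[OF \<open>\<epsilon> > 0\<close>])
    fix J' assume near: "\<forall>e\<in>edges. \<bar>J' e - J e\<bar> < \<epsilon>"
    have "noncritical J'"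
      unfolding noncritical_def inj_on_def
    proof (intro ballI impI)
      fix \<eta> \<eta>' assume \<eta>: "\<eta> \<in> configs" "\<eta>' \<in> configs" and eq: "energy J' \<eta> = energy J' \<eta>'"
      show "\<eta> = \<eta>'"
      proof (rule ccontr)
        assume "\<eta> \<noteq> \<eta>'"
        with assms \<eta> have "energy J \<eta> \<noteq> energy J \<eta>'" by (auto simp: noncritical_def inj_on_def)
        with stable[OF near] \<eta> eq show False by (metis less_irrefl linorder_neqE_linordered_idom)
      qed
    qed
    have same_state: "ground_state_b L E b s J' = ground_state_b L E b s J" if "s \<in> {1, -1}" for s
      unfolding ground_state_b_def
      by (rule restr_min_eqI) (use ground_state_b_minimal[OF assms that] stable[OF near] in
          \<open>auto simp: ground_state_b_def\<close>)
    have pm: "?p \<in> configs" "?m \<in> configs"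
      using ground_state_b_minimal[OF assms, of 1] ground_state_b_minimal[OF assms, of "-1"] by auto
    have "sgn (energy J' ?p - energy J' ?m) = sgn (energy J ?p - energy J ?m)"
    proof (cases "energy J ?p < energy J ?m")
      case True
      with stable[OF near pm] show ?thesis by (simp add: sgn_if)
    next
      case False
      with energy_plus_ne_minus[OF assms] have "energy J ?m < energy J ?p" by simp
      with stable[OF near pm(2,1)] show ?thesis by (simp add: sgn_if)
    qed
    then show "flexibility L E b J' = sgn (energy J ?p - energy J ?m) * (energy J' ?p - energy J' ?m)"
      using flexibility_eq[OF \<open>noncritical J'\<close>] same_state by (simp add: abs_sgn)
  qed
qed

lemma ground_state_eq:
  assumes "noncritical J"
  shows "ground_state L E J =
    (if energy J (plus_state J) < energy J (minus_state J) then plus_state J else minus_state J)"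
proof -
  let ?p = "plus_state J" and ?m = "minus_state J"
  have p: "?p \<in> configs" "?p b = 1" "\<And>\<eta>. \<eta> \<in> configs \<Longrightarrow> \<eta> b = 1 \<Longrightarrow> \<eta> \<noteq> ?p \<Longrightarrow> energy J ?p < energy J \<eta>"
    using ground_state_b_minimal[OF assms, of 1] by auto
  have m: "?m \<in> configs" "?m b = -1" "\<And>\<eta>. \<eta> \<in> configs \<Longrightarrow> \<eta> b = -1 \<Longrightarrow> \<eta> \<noteq> ?m \<Longrightarrow> energy J ?m < energy J \<eta>"
    using ground_state_b_minimal[OF assms, of "-1"] by auto
  let ?r = "if energy J ?p < energy J ?m then ?p else ?m"
  have "energy J ?r < energy J \<eta>" if "\<eta> \<in> configs" "\<eta> \<noteq> ?r" for \<eta>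
  proof (cases "\<eta> = ?p \<or> \<eta> = ?m")
    case True
    with that energy_plus_ne_minus[OF assms] show ?thesis by (auto split: if_splits)
  next
    case False
    have "\<eta> b = 1 \<or> \<eta> b = -1" using that(1) b_edge by (rule edge_config_on_edge)
    with p(3) m(3) that(1) False have "min (energy J ?p) (energy J ?m) < energy J \<eta>"
      by (auto simp: min_less_iff_disj)
    then show ?thesis by (auto simp: min_def split: if_splits)
  qed
  then show ?thesis
    unfolding ground_state_def using p(1) m(1) by (intro restr_min_eqI) auto
qed

lemma partial_slope_eq:
  assumes "noncritical J" "e \<in> edges"
  shows "- sgn (energy J (plus_state J) - energy J (minus_state J)) * (plus_state J e - minus_state J e)
    = (if e \<in> droplet_boundary L E b J then 2 * ground_state L E J e else 0)"
proof -
  let ?p = "plus_state J" and ?m = "minus_state J"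
  have "?p e = 1 \<or> ?p e = -1" "?m e = 1 \<or> ?m e = -1"
    using ground_state_b_minimal[OF assms(1)] edge_config_on_edge assms(2) by blast+
  then show ?thesis
    using assms ground_state_eq[OF assms(1)] energy_plus_ne_minus[OF assms(1)]
    by (auto simp: droplet_boundary_def sgn_if)
qed

lemma energy_shift_coordinate:
  assumes "e \<in> edges"
  shows "energy (\<lambda>e'. J e' + (if e' = e then t else 0)) \<eta> = energy J \<eta> - t * \<eta> e"
  using assms finite_edges by (simp add: energy_eq distrib_right sum.distrib if_distrib[of "\<lambda>x. x * _"])

lemma continuous_on_energy: "continuous_on UNIV (\<lambda>J. energy J \<eta>)"
  unfolding energy_eq by (intro continuous_intros continuous_on_product_coordinates)

lemma critical_set_dense: "coupling_space L \<subseteq> closure (coupling_space L - critical_set L E)"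
proof
  fix J assume J: "J \<in> coupling_space L"
  let ?P = "(\<lambda>(\<eta>, \<eta>'). (\<lambda>e. \<eta> e - \<eta>' e, E \<eta> \<eta>')) ` {(\<eta>, \<eta>'). \<eta> \<in> configs \<and> \<eta>' \<in> configs \<and> \<eta> \<noteq> \<eta>'}"
  have finite_P: "finite ?P"
    by (rule finite_imageI, rule finite_subset[of _ "configs \<times> configs"]) (auto simp: finite_configs)
  have nonzero_P: "\<forall>(d, c)\<in>?P. \<exists>e\<in>edges. d e \<noteq> 0"
  proof clarsimp
    fix \<eta> \<eta>' assume "\<eta> \<in> configs" "\<eta>' \<in> configs" "\<eta> \<noteq> \<eta>'"
    then obtain e where "\<eta> e \<noteq> \<eta>' e" by (auto simp: fun_eq_iff)
    moreover have "e \<in> edges"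
    proof (rule ccontr)
      assume "e \<notin> edges"
      then have "\<eta> e = 0" "\<eta>' e = 0"
        using edge_config_off_edge \<open>\<eta> \<in> configs\<close> \<open>\<eta>' \<in> configs\<close> by blast+
      with \<open>\<eta> e \<noteq> \<eta>' e\<close> show False by simp
    qed
    ultimately show "\<exists>e\<in>edges. \<eta> e \<noteq> \<eta>' e" by blast
  qed
  have J_supp: "\<forall>e. e \<notin> edges \<longrightarrow> J e = 0" using J by (simp add: coupling_space_def)
  have avoid: "\<exists>J'\<in>S. (\<forall>e. e \<notin> edges \<longrightarrow> J' e = 0) \<and> (\<forall>(d, c)\<in>?P. (\<Sum>e\<in>edges. J' e * d e) \<noteq> c)"
    if "open S" "J \<in> S" for S
    by (rule avoid_hyperplanes[OF finite_edges finite_P nonzero_P that J_supp])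
  show "J \<in> closure (coupling_space L - critical_set L E)"
    unfolding closure_iff_nhds_not_empty
  proof (intro allI impI)
    fix A S assume "S \<subseteq> A" "open S" "J \<in> S"
    then obtain J' where J': "J' \<in> S" "\<forall>e. e \<notin> edges \<longrightarrow> J' e = 0"
      and off: "\<forall>(d, c)\<in>?P. (\<Sum>e\<in>edges. J' e * d e) \<noteq> c"
      using avoid by blast
    have "J' \<notin> critical_set L E"
    proof
      assume "J' \<in> critical_set L E"
      then obtain \<eta> \<eta>' where "\<eta> \<in> configs" "\<eta>' \<in> configs" "\<eta> \<noteq> \<eta>'"
        and "(\<Sum>e\<in>edges. J' e * (\<eta> e - \<eta>' e)) = E \<eta> \<eta>'"
        by (auto simp: critical_set_def)
      with off show False by fastforce
    qed
    with J' \<open>S \<subseteq> A\<close> show "(coupling_space L - critical_set L E) \<inter> A \<noteq> {}"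
      by (auto simp: coupling_space_def)
  qed
qed

lemma flexibility_piecewise_affine:
  "piecewise_affine_on L (coupling_space L - critical_set L E) (flexibility L E b)"
proof -
  define branch where
    "branch = (\<lambda>(s, p, m). (\<lambda>e. - s * (p e - m e), s * (E ref_config m - E ref_config p)))"
  have affine: "s * (energy J' p - energy J' m) = c + (\<Sum>e\<in>edges. g e * J' e)"
    if "branch (s, p, m) = (g, c)" for s p m g c J'
    using that by (auto simp: branch_def energy_eq sum_subtractf sum_distrib_left algebra_simps)
  show ?thesis
    unfolding piecewise_affine_on_def
  proof (intro exI[of _ "branch ` ({-1, 0, 1} \<times> configs \<times> configs)"] conjI ballI)
    show "finite (branch ` ({-1, 0, 1} \<times> configs \<times> configs))" using finite_configs by simp
    fix J assume "J \<in> coupling_space L - critical_set L E"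
    then have "noncritical J" by (simp add: critical_set_iff)
    then obtain \<epsilon> where "\<epsilon> > 0" and local: "\<And>J'. \<forall>e\<in>edges. \<bar>J' e - J e\<bar> < \<epsilon> \<Longrightarrow>
        flexibility L E b J' = sgn (energy J (plus_state J) - energy J (minus_state J)) *
          (energy J' (plus_state J) - energy J' (minus_state J))"
      using flexibility_local_branch by blast
    let ?k = "(sgn (energy J (plus_state J) - energy J (minus_state J)), plus_state J, minus_state J)"
    obtain g c where gc: "branch ?k = (g, c)" by fastforce
    have "?k \<in> {-1, 0, 1} \<times> configs \<times> configs"
      using ground_state_b_minimal[OF \<open>noncritical J\<close>, of 1]
        ground_state_b_minimal[OF \<open>noncritical J\<close>, of "-1"]
      by (auto simp: sgn_if)
    then have "(g, c) \<in> branch ` ({-1, 0, 1} \<times> configs \<times> configs)" by (metis gc image_eqI)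
    moreover have "flexibility L E b J' = c + (\<Sum>e\<in>edges. g e * J' e)"
      if "\<forall>e\<in>edges. \<bar>J' e - J e\<bar> < \<epsilon>" for J'
      using local[OF that] affine[OF gc] by simp
    ultimately show "\<exists>\<epsilon>>0. \<exists>(g, c)\<in>branch ` ({-1, 0, 1} \<times> configs \<times> configs).
        \<forall>J'\<in>coupling_space L - critical_set L E. (\<forall>e\<in>edges. \<bar>J' e - J e\<bar> < \<epsilon>) \<longrightarrow>
          flexibility L E b J' = c + (\<Sum>e\<in>edges. g e * J' e)"
      using \<open>\<epsilon> > 0\<close> by blast
  qed
qed

lemma flexibility_partial_derivative:
  assumes "noncritical J" "e \<in> edges"
  shows "((\<lambda>t. flexibility L E b (\<lambda>e'. J e' + (if e' = e then t else 0))) has_real_derivative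
      (if e \<in> droplet_boundary L E b J then 2 * ground_state L E J e else 0)) (at 0)"
proof -
  let ?p = "plus_state J" and ?m = "minus_state J"
  let ?s = "sgn (energy J ?p - energy J ?m)"
  obtain \<epsilon> where "\<epsilon> > 0" and local: "\<And>J'. \<forall>e\<in>edges. \<bar>J' e - J e\<bar> < \<epsilon> \<Longrightarrow>
      flexibility L E b J' = ?s * (energy J' ?p - energy J' ?m)"
    using flexibility_local_branch[OF assms(1)] by blast
  have line: "((\<lambda>t. ?s * (energy J ?p - energy J ?m) - ?s * (?p e - ?m e) * t)
      has_real_derivative - ?s * (?p e - ?m e)) (at 0)"
    by (auto intro!: derivative_eq_intros)
  have "((\<lambda>t. flexibility L E b (\<lambda>e'. J e' + (if e' = e then t else 0)))
      has_real_derivative - ?s * (?p e - ?m e)) (at 0)"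
  proof (rule has_field_derivative_transform_within_open[OF line, of "ball 0 \<epsilon>"])
    fix t :: real assume "t \<in> ball 0 \<epsilon>"
    let ?J' = "\<lambda>e'. J e' + (if e' = e then t else 0)"
    have "\<forall>e'\<in>edges. \<bar>?J' e' - J e'\<bar> < \<epsilon>" using \<open>t \<in> ball 0 \<epsilon>\<close> \<open>\<epsilon> > 0\<close> by auto
    then have "flexibility L E b ?J' = ?s * (energy ?J' ?p - energy ?J' ?m)" by (rule local)
    also have "\<dots> = ?s * (energy J ?p - energy J ?m) - ?s * (?p e - ?m e) * t"
      by (simp add: energy_shift_coordinate[OF assms(2)] algebra_simps)
    finally show "?s * (energy J ?p - energy J ?m) - ?s * (?p e - ?m e) * t = flexibility L E b ?J'"
      by simp
  qed (use \<open>\<epsilon> > 0\<close> in auto)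
  then show ?thesis unfolding partial_slope_eq[OF assms] .
qed

lemma flexibility_continuous_extension:
  "\<exists>G. continuous_on UNIV G \<and> (\<forall>J. noncritical J \<longrightarrow> G J = flexibility L E b J)"
proof (intro exI conjI allI impI)
  let ?min = "\<lambda>J s. Min (energy J ` {\<eta>\<in>configs. \<eta> b = s})"
  have "continuous_on UNIV (\<lambda>J. ?min J s)" if "s \<in> {1, -1}" for s
  proof (rule continuous_on_Min_image)
    show "{\<eta>\<in>configs. \<eta> b = s} \<noteq> {}" using edge_config_with_value[OF b_edge that] by auto
  qed (simp_all add: finite_configs continuous_on_energy)
  then show "continuous_on UNIV (\<lambda>J. \<bar>?min J 1 - ?min J (-1)\<bar>)"
    by (intro continuous_on_rabs continuous_on_diff) auto
  fix J assume "noncritical J"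
  have "?min J s = energy J (ground_state_b L E b s J)" if "s \<in> {1, -1}" for s
    unfolding ground_state_b_def using edge_config_with_value[OF b_edge that]
    by (rule Min_energy_restr_min[OF \<open>noncritical J\<close>])
  then show "\<bar>?min J 1 - ?min J (-1)\<bar> = flexibility L E b J"
    by (simp add: flexibility_eq[OF \<open>noncritical J\<close>])
qed

end

theorem lemma2p7:
  fixes lo hi :: "int ^ 'd::finite"
    and E :: "'d econf \<Rightarrow> 'd econf \<Rightarrow> real"
    and b :: "'d edge"
  assumes E: "consistent_E (zbox lo hi) E"
    and b: "b \<in> nn_edges (zbox lo hi)"
  shows "piecewise_affine_on (zbox lo hi)
           (coupling_space (zbox lo hi) - critical_set (zbox lo hi) E)
           (flexibility (zbox lo hi) E b)
       \<and> (\<forall>J\<in>coupling_space (zbox lo hi) - critical_set (zbox lo hi) E.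
            \<forall>e\<in>nn_edges (zbox lo hi).
              ((\<lambda>t. flexibility (zbox lo hi) E b (\<lambda>e'. J e' + (if e' = e then t else 0)))
                 has_real_derivative
                 (if e \<in> droplet_boundary (zbox lo hi) E b J
                  then 2 * ground_state (zbox lo hi) E J e else 0)) (at 0))
       \<and> (\<exists>G. continuous_on (coupling_space (zbox lo hi)) G \<and>
              (\<forall>J\<in>coupling_space (zbox lo hi) - critical_set (zbox lo hi) E.
                 G J = flexibility (zbox lo hi) E b J))
       \<and> (\<forall>G1 G2. continuous_on (coupling_space (zbox lo hi)) G1 \<and>
                 (\<forall>J\<in>coupling_space (zbox lo hi) - critical_set (zbox lo hi) E.
                    G1 J = flexibility (zbox lo hi) E b J) \<and>
                 continuous_on (coupling_space (zbox lo hi)) G2 \<and>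
                 (\<forall>J\<in>coupling_space (zbox lo hi) - critical_set (zbox lo hi) E.
                    G2 J = flexibility (zbox lo hi) E b J)
              \<longrightarrow> (\<forall>J\<in>coupling_space (zbox lo hi). G1 J = G2 J))"
proof -
  let ?L = "zbox lo hi"
  interpret flexibility_setting ?L E b
    using finite_zbox E b by unfold_locales
  let ?U = "coupling_space ?L - critical_set ?L E"
  have noncritical: "noncritical J" if "J \<in> ?U" for J
    using that critical_set_iff by blast
  obtain G where G: "continuous_on UNIV G" "\<forall>J. noncritical J \<longrightarrow> G J = flexibility ?L E b J"
    using flexibility_continuous_extension by (elim exE conjE)
  have unique: "\<forall>G1 G2. continuous_on (coupling_space ?L) G1 \<and> (\<forall>J\<in>?U. G1 J = flexibility ?L E b J) \<and>
      continuous_on (coupling_space ?L) G2 \<and> (\<forall>J\<in>?U. G2 J = flexibility ?L E b J)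
      \<longrightarrow> (\<forall>J\<in>coupling_space ?L. G1 J = G2 J)"
  proof (intro allI impI ballI, elim conjE)
    fix G1 G2 J
    assume G1: "continuous_on (coupling_space ?L) G1" "\<forall>J\<in>?U. G1 J = flexibility ?L E b J"
      and G2: "continuous_on (coupling_space ?L) G2" "\<forall>J\<in>?U. G2 J = flexibility ?L E b J"
      and J: "J \<in> coupling_space ?L"
    show "G1 J = G2 J"
    proof (rule continuous_on_eq_on_dense[OF G1(1) G2(1) _ _ critical_set_dense J])
      show "G1 J' = G2 J'" if "J' \<in> ?U" for J' using G1(2) G2(2) that by simp
    qed blast
  qed
  have "continuous_on (coupling_space ?L) G" using G(1) by (rule continuous_on_subset) simp
  with G(2) noncritical have extension: "\<exists>G. continuous_on (coupling_space ?L) G \<and>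
      (\<forall>J\<in>?U. G J = flexibility ?L E b J)" by blast
  have derivative: "\<forall>J\<in>?U. \<forall>e\<in>nn_edges ?L.
      ((\<lambda>t. flexibility ?L E b (\<lambda>e'. J e' + (if e' = e then t else 0))) has_real_derivative
        (if e \<in> droplet_boundary ?L E b J then 2 * ground_state ?L E J e else 0)) (at 0)"
    using flexibility_partial_derivative noncritical by blast
  show ?thesis
    using flexibility_piecewise_affine derivative extension unique by (intro conjI)
qed

end
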